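(* For every tight Rabin GFG automaton, there exists an equivalent strongly tight Rabin GFG automaton over the same structure.
   Context: An automaton is $\mathcal{A}=\langle\Sigma,Q,Q_0,\delta,\alpha\rangle$ with structure $\langle\Sigma,Q,Q_0,\delta\rangle$ ($\delta:Q\times\Sigma\to2^Q$). In a Rabin automaton $\alpha$ is a set of pairs $\langle E,F\rangle$ of sets of states ($E$ the bad set, $F$ the good set); a set $S$ of states is accepting if for some pair $S\cap E=\emptyset$ and $S\cap F\neq\emptyset$; a run is accepting if its set of infinitely visited states is accepting. $\mathcal{A}$ is GFG if there is a strategy $g:\Sigma^*\to Q$ such that for every $w=a_1a_2\cdots$, $g(\epsilon),g(a_1),g(a_1a_2),\ldots$ is a run on $w$, accepting whenever $w\in L(\mathcal{A})$. Finite-state strategies are transducers $g=\langle\Sigma,Q,M,m_0,\rho,\tau\rangle$ (finite memories $M$, $\rho:M\times\Sigma\to M$ extended to words from $m_0$, $\tau:M\to Q$, $g(u)=\tau(\rho(u))$); $m$ is a memory of $q$ if $\tau(m)=q$. $\mathcal{A}_g=\langle\Sigma,M,m_0,\rho,\alpha_g\rangle$ where $\alpha_g$ replaces each set $F$ in $\alpha$ by $\{m\mid\tau(m)\in F\}$. A transition $\langle q,a,q'\rangle$ is used by $g$ if $q=g(u)$, $q'=g(ua)$ for some $u$. Paths are finite sequences of states joined by transitions, cycles are paths whose first and last elements coincide; for a set $P$ of paths, a combination is the union of the state sets of a nonempty subset of $P$. For memories $m\neq m'$ with $\tau(m)=\tau(m')$, $m$ is replaceable by $m'$ if the set of paths of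 $\mathcal{A}_g$ from $m'$ to $m$ is empty or all its combinations are accepting. $\mathcal{A}$ is tight w.r.t. a finite-state strategy $g$ witnessing GFGness if all transitions are used by $g$ and no memory is replaceable by a different memory of the same state; tight if tight w.r.t. some such $g$. For a state $q$, a path of $\mathcal{A}_g$ is $q$-exclusive accepting if its set of memories is accepting but that set minus the memories of $q$ is not accepting. A Rabin GFG automaton is strongly tight w.r.t. $g$ if it is tight w.r.t. $g$ and for every state $q$ appearing in some good set of $\alpha$ there is a $q$-exclusive accepting cycle in $\mathcal{A}_g$; strongly tight if so w.r.t. some $g$. Equivalent means same language; over the same structure means only the acceptance condition differs. *)

theory Defs
  imports Main
begin

definition wf_rabin ::
  "'a set \<Rightarrow> 'q set \<Rightarrow> 'q set \<Rightarrow> ('q \<Rightarrow> 'a \<Rightarrow> 'q set) \<Rightarrow> ('q set \<times> 'q set) set \<Rightarrow> bool" where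
  "wf_rabin S Q Q0 d al \<longleftrightarrow> finite S \<and> finite Q \<and> Q0 \<subseteq> Q \<and>
     (\<forall>q\<in>Q. \<forall>a\<in>S. d q a \<subseteq> Q) \<and> finite al \<and> (\<forall>(E,F)\<in>al. E \<subseteq> Q \<and> F \<subseteq> Q)"

definition rabin_acc :: "('s set \<times> 's set) set \<Rightarrow> 's set \<Rightarrow> bool" where
  "rabin_acc al X \<longleftrightarrow> (\<exists>(E,F)\<in>al. X \<inter> E = {} \<and> X \<inter> F \<noteq> {})"

definition inf_set :: "(nat \<Rightarrow> 's) \<Rightarrow> 's set" where
  "inf_set r = {q. \<exists>\<^sub>\<infinity> i. r i = q}"

definition is_word :: "'a set \<Rightarrow> (nat \<Rightarrow> 'a) \<Rightarrow> bool" where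
  "is_word S w \<longleftrightarrow> (\<forall>i. w i \<in> S)"

definition is_run :: "'q set \<Rightarrow> ('q \<Rightarrow> 'a \<Rightarrow> 'q set) \<Rightarrow> (nat \<Rightarrow> 'a) \<Rightarrow> (nat \<Rightarrow> 'q) \<Rightarrow> bool" where
  "is_run Q0 d w r \<longleftrightarrow> r 0 \<in> Q0 \<and> (\<forall>i. r (Suc i) \<in> d (r i) (w i))"

definition lang ::
  "'a set \<Rightarrow> 'q set \<Rightarrow> ('q \<Rightarrow> 'a \<Rightarrow> 'q set) \<Rightarrow> ('q set \<times> 'q set) set \<Rightarrow> (nat \<Rightarrow> 'a) set" where
  "lang S Q0 d al = {w. is_word S w \<and> (\<exists>r. is_run Q0 d w r \<and> rabin_acc al (inf_set r))}"

definition pref :: "(nat \<Rightarrow> 'a) \<Rightarrow> nat \<Rightarrow> 'a list" where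
  "pref w i = map w [0..<i]"

definition gfg_strategy ::
  "'a set \<Rightarrow> 'q set \<Rightarrow> ('q \<Rightarrow> 'a \<Rightarrow> 'q set) \<Rightarrow> ('q set \<times> 'q set) set \<Rightarrow> ('a list \<Rightarrow> 'q) \<Rightarrow> bool" where
  "gfg_strategy S Q0 d al g \<longleftrightarrow>
     (\<forall>w. is_word S w \<longrightarrow>
        is_run Q0 d w (\<lambda>i. g (pref w i)) \<and>
        (w \<in> lang S Q0 d al \<longrightarrow> rabin_acc al (inf_set (\<lambda>i. g (pref w i)))))"

definition is_gfg ::
  "'a set \<Rightarrow> 'q set \<Rightarrow> ('q \<Rightarrow> 'a \<Rightarrow> 'q set) \<Rightarrow> ('q set \<times> 'q set) set \<Rightarrow> bool" where
  "is_gfg S Q0 d al \<longleftrightarrow> (\<exists>g. gfg_strategy S Q0 d al g)"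

(* Finite-state strategies: transducers with memories M (finite set of naturals),
   initial memory m0, memory update rho, output tau. *)
definition transducer ::
  "'a set \<Rightarrow> 'q set \<Rightarrow> nat set \<Rightarrow> nat \<Rightarrow> (nat \<Rightarrow> 'a \<Rightarrow> nat) \<Rightarrow> (nat \<Rightarrow> 'q) \<Rightarrow> bool" where
  "transducer S Q M m0 rho tau \<longleftrightarrow> finite M \<and> m0 \<in> M \<and>
     (\<forall>m\<in>M. \<forall>a\<in>S. rho m a \<in> M) \<and> (\<forall>m\<in>M. tau m \<in> Q)"

definition strat :: "nat \<Rightarrow> (nat \<Rightarrow> 'a \<Rightarrow> nat) \<Rightarrow> (nat \<Rightarrow> 'q) \<Rightarrow> 'a list \<Rightarrow> 'q" where
  "strat m0 rho tau u = tau (foldl rho m0 u)"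

definition alpha_g :: "nat set \<Rightarrow> (nat \<Rightarrow> 'q) \<Rightarrow> ('q set \<times> 'q set) set \<Rightarrow> (nat set \<times> nat set) set" where
  "alpha_g M tau al = (\<lambda>(E,F). ({m\<in>M. tau m \<in> E}, {m\<in>M. tau m \<in> F})) ` al"

definition is_path :: "'a set \<Rightarrow> nat set \<Rightarrow> (nat \<Rightarrow> 'a \<Rightarrow> nat) \<Rightarrow> nat list \<Rightarrow> bool" where
  "is_path S M rho p \<longleftrightarrow> p \<noteq> [] \<and> set p \<subseteq> M \<and>
     (\<forall>i. Suc i < length p \<longrightarrow> (\<exists>a\<in>S. rho (p ! i) a = p ! Suc i))"

definition paths_from_to :: "'a set \<Rightarrow> nat set \<Rightarrow> (nat \<Rightarrow> 'a \<Rightarrow> nat) \<Rightarrow> nat \<Rightarrow> nat \<Rightarrow> nat list set" where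
  "paths_from_to S M rho m1 m2 = {p. is_path S M rho p \<and> hd p = m1 \<and> last p = m2}"

definition combinations :: "'s list set \<Rightarrow> 's set set" where
  "combinations P = {\<Union>(set ` X) | X. X \<subseteq> P \<and> X \<noteq> {}}"

definition replaceable ::
  "'a set \<Rightarrow> nat set \<Rightarrow> (nat \<Rightarrow> 'a \<Rightarrow> nat) \<Rightarrow> (nat \<Rightarrow> 'q) \<Rightarrow> ('q set \<times> 'q set) set \<Rightarrow> nat \<Rightarrow> nat \<Rightarrow> bool" where
  "replaceable S M rho tau al m m' \<longleftrightarrow> m \<noteq> m' \<and> tau m = tau m' \<and>
     (paths_from_to S M rho m' m = {} \<or>
      (\<forall>C\<in>combinations (paths_from_to S M rho m' m). rabin_acc (alpha_g M tau al) C))"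

definition tight_wrt ::
  "'a set \<Rightarrow> 'q set \<Rightarrow> 'q set \<Rightarrow> ('q \<Rightarrow> 'a \<Rightarrow> 'q set) \<Rightarrow> ('q set \<times> 'q set) set \<Rightarrow>
   nat set \<Rightarrow> nat \<Rightarrow> (nat \<Rightarrow> 'a \<Rightarrow> nat) \<Rightarrow> (nat \<Rightarrow> 'q) \<Rightarrow> bool" where
  "tight_wrt S Q Q0 d al M m0 rho tau \<longleftrightarrow>
     transducer S Q M m0 rho tau \<and> gfg_strategy S Q0 d al (strat m0 rho tau) \<and>
     (\<forall>q\<in>Q. \<forall>a\<in>S. \<forall>q'\<in>d q a. \<exists>u\<in>lists S.
         strat m0 rho tau u = q \<and> strat m0 rho tau (u @ [a]) = q') \<and>
     (\<forall>m\<in>M. \<forall>m'\<in>M. \<not> replaceable S M rho tau al m m')"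

definition tight ::
  "'a set \<Rightarrow> 'q set \<Rightarrow> 'q set \<Rightarrow> ('q \<Rightarrow> 'a \<Rightarrow> 'q set) \<Rightarrow> ('q set \<times> 'q set) set \<Rightarrow> bool" where
  "tight S Q Q0 d al \<longleftrightarrow> (\<exists>M m0 rho tau. tight_wrt S Q Q0 d al M m0 rho tau)"

definition excl_acc_cycle ::
  "'a set \<Rightarrow> nat set \<Rightarrow> (nat \<Rightarrow> 'a \<Rightarrow> nat) \<Rightarrow> (nat \<Rightarrow> 'q) \<Rightarrow> ('q set \<times> 'q set) set \<Rightarrow> 'q \<Rightarrow> nat list \<Rightarrow> bool" where
  "excl_acc_cycle S M rho tau al q p \<longleftrightarrow>
     is_path S M rho p \<and> length p \<ge> 2 \<and> hd p = last p \<and>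
     rabin_acc (alpha_g M tau al) (set p) \<and>
     \<not> rabin_acc (alpha_g M tau al) (set p - {m. tau m = q})"

definition strongly_tight ::
  "'a set \<Rightarrow> 'q set \<Rightarrow> 'q set \<Rightarrow> ('q \<Rightarrow> 'a \<Rightarrow> 'q set) \<Rightarrow> ('q set \<times> 'q set) set \<Rightarrow> bool" where
  "strongly_tight S Q Q0 d al \<longleftrightarrow> (\<exists>M m0 rho tau.
     tight_wrt S Q Q0 d al M m0 rho tau \<and>
     (\<forall>(E,F)\<in>al. \<forall>q\<in>F. \<exists>p. excl_acc_cycle S M rho tau al q p))"

end

(* Let g be a finite-memory strategy witnessing tightness. The infinity set of every run of g is
   the image under tau of a cycle of A_g, so a condition al' accepting no more sets than al but
   all images of al-accepting cycles keeps the language, keeps g as a GFG strategy and keeps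
   every memory irreplaceable. Rejecting sets of a Rabin condition are closed under union, and
   conversely every union-closed family containing the empty set is the rejecting family of a
   Rabin condition. Taking for al' the condition whose rejecting family is a maximal
   union-closed extension R of the al-rejecting sets avoiding those cycle images, maximality
   yields for every state q of a good set (where {q} is not in R) an accepting cycle image that
   becomes rejecting when q is removed. *)

theory Submission
  imports Defs
begin

lemma rabin_accI: "(E, F) \<in> al \<Longrightarrow> X \<inter> E = {} \<Longrightarrow> X \<inter> F \<noteq> {} \<Longrightarrow> rabin_acc al X"
  unfolding rabin_acc_def by blast

lemma rabin_accE:
  assumes "rabin_acc al X"
  obtains E F where "(E, F) \<in> al" "X \<inter> E = {}" "X \<inter> F \<noteq> {}"
  using assms unfolding rabin_acc_def by blast

lemma not_rabin_acc_empty: "\<not> rabin_acc al {}"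
  unfolding rabin_acc_def by auto

lemma rabin_acc_Un:
  assumes "rabin_acc al (A \<union> B)"
  shows "rabin_acc al A \<or> rabin_acc al B"
proof -
  obtain E F where "(E, F) \<in> al" "(A \<union> B) \<inter> E = {}" "(A \<union> B) \<inter> F \<noteq> {}"
    using assms by (rule rabin_accE)
  then show ?thesis by (metis Int_Un_distrib2 Un_empty rabin_accI)
qed

lemma rabin_acc_Int:
  assumes "\<forall>(E, F)\<in>al. E \<subseteq> Q \<and> F \<subseteq> Q"
  shows "rabin_acc al (Y \<inter> Q) \<longleftrightarrow> rabin_acc al Y"
proof -
  have "Y \<inter> Q \<inter> E = Y \<inter> E \<and> Y \<inter> Q \<inter> F = Y \<inter> F" if "(E, F) \<in> al" for E F
    using assms that by blast
  then show ?thesis unfolding rabin_acc_def by (intro bex_cong) auto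
qed

lemma rabin_acc_alpha_g: "rabin_acc (alpha_g M tau al) C \<longleftrightarrow> rabin_acc al (tau ` (C \<inter> M))"
proof -
  have "C \<inter> {m\<in>M. tau m \<in> E} = {} \<longleftrightarrow> tau ` (C \<inter> M) \<inter> E = {}" for E
    by blast
  then show ?thesis unfolding rabin_acc_def alpha_g_def by (simp add: split_beta)
qed

definition union_closed :: "'s set set \<Rightarrow> bool" where
  "union_closed R \<longleftrightarrow> (\<forall>A\<in>R. \<forall>B\<in>R. A \<union> B \<in> R)"

lemma union_closed_Union:
  assumes "union_closed R" "{} \<in> R" "finite A" "A \<subseteq> R"
  shows "\<Union>A \<in> R"
  using assms(3,4) by (induction A rule: finite_induct) (use assms(1,2) in \<open>auto simp: union_closed_def\<close>)

(* For X outside R, the pair indexed by X accepts exactly the subsets of X not contained in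
   the largest member of R inside X. *)
definition rabin_of :: "'s set \<Rightarrow> 's set set \<Rightarrow> ('s set \<times> 's set) set" where
  "rabin_of Q R = (\<lambda>X. (Q - X, X - \<Union>{A\<in>R. A \<subseteq> X})) ` {X. X \<subseteq> Q \<and> X \<notin> R}"

lemma rabin_of_subset: "(E, F) \<in> rabin_of Q R \<Longrightarrow> E \<subseteq> Q \<and> F \<subseteq> Q"
  unfolding rabin_of_def by auto

lemma finite_rabin_of: "finite Q \<Longrightarrow> finite (rabin_of Q R)"
  unfolding rabin_of_def by simp

lemma rabin_acc_rabin_of:
  assumes "finite Q" "union_closed R" "{} \<in> R"
  shows "rabin_acc (rabin_of Q R) Y \<longleftrightarrow> Y \<inter> Q \<notin> R"
proof
  assume "rabin_acc (rabin_of Q R) Y"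
  then obtain X where X: "X \<subseteq> Q" "X \<notin> R" "Y \<inter> (Q - X) = {}" "Y \<inter> (X - \<Union>{A\<in>R. A \<subseteq> X}) \<noteq> {}"
    unfolding rabin_acc_def rabin_of_def by auto
  then show "Y \<inter> Q \<notin> R" by blast
next
  assume Y: "Y \<inter> Q \<notin> R"
  let ?X = "Y \<inter> Q"
  have "finite {A\<in>R. A \<subseteq> ?X}"
    using assms(1) by (auto intro: finite_subset[of _ "Pow Q"])
  then have "\<Union>{A\<in>R. A \<subseteq> ?X} \<in> R"
    using assms(2,3) by (intro union_closed_Union) auto
  then have "\<Union>{A\<in>R. A \<subseteq> ?X} \<subset> ?X"
    using Y by (metis (no_types, lifting) Sup_le_iff mem_Collect_eq psubsetI)
  then have "Y \<inter> (?X - \<Union>{A\<in>R. A \<subseteq> ?X}) \<noteq> {}"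
    by blast
  moreover have "(Q - ?X, ?X - \<Union>{A\<in>R. A \<subseteq> ?X}) \<in> rabin_of Q R"
    unfolding rabin_of_def using Y by auto
  ultimately show "rabin_acc (rabin_of Q R) Y"
    by (intro rabin_accI) blast+
qed

lemma good_set_rabin_of: "(E, F) \<in> rabin_of Q R \<Longrightarrow> q \<in> F \<Longrightarrow> {q} \<notin> R"
  unfolding rabin_of_def by auto

lemma maximal_union_closed_family:
  assumes "finite Q" "N \<subseteq> Pow Q" "union_closed N" "{} \<in> N" "N \<inter> Y = {}"
  obtains R where "N \<subseteq> R" "R \<subseteq> Pow Q" "union_closed R" "R \<inter> Y = {}"
    "\<And>W. W \<subseteq> Q \<Longrightarrow> W \<notin> R \<Longrightarrow> \<exists>A\<in>R. W \<union> A \<in> Y"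
proof -
  define Cand where "Cand = {R. N \<subseteq> R \<and> R \<subseteq> Pow Q \<and> union_closed R \<and> R \<inter> Y = {}}"
  have "Cand \<subseteq> Pow (Pow Q)" unfolding Cand_def by blast
  then have "finite Cand"
    using assms(1) by (simp add: finite_subset)
  moreover have "N \<in> Cand" unfolding Cand_def using assms(2-5) by blast
  ultimately obtain R where "R \<in> Cand" and max: "\<forall>R'\<in>Cand. R \<subseteq> R' \<longrightarrow> R = R'"
    using finite_has_maximal[of Cand] by blast
  then have R: "N \<subseteq> R" "R \<subseteq> Pow Q" "union_closed R" "R \<inter> Y = {}"
    unfolding Cand_def by blast+
  have maximal: "\<exists>A\<in>R. W \<union> A \<in> Y" if W: "W \<subseteq> Q" "W \<notin> R" for W
  proof (rule ccontr)
    assume no: "\<not> (\<exists>A\<in>R. W \<union> A \<in> Y)"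
    let ?R' = "R \<union> (\<union>) W ` R"
    have "union_closed ?R'"
      unfolding union_closed_def
    proof (intro ballI)
      fix A B assume "A \<in> ?R'" "B \<in> ?R'"
      then obtain a b where ab: "a \<in> R" "b \<in> R" "A = a \<or> A = W \<union> a" "B = b \<or> B = W \<union> b"
        by blast
      have "a \<union> b \<in> R" using R ab(1,2) unfolding union_closed_def by blast
      then have "a \<union> b \<in> ?R'" "W \<union> (a \<union> b) \<in> ?R'" by auto
      moreover have "A \<union> B = a \<union> b \<or> A \<union> B = W \<union> (a \<union> b)"
        using ab(3,4) by blast
      ultimately show "A \<union> B \<in> ?R'" by metis
    qed
    moreover have "?R' \<inter> Y = {}" using R(4) no by blast
    ultimately have "?R' \<in> Cand" unfolding Cand_def using R(1,2) W(1) by blast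
    then have "R = ?R'" using max by blast
    moreover have "W \<union> {} \<in> ?R'" using R(1) assms(4) by blast
    ultimately show False using W by blast
  qed
  show thesis by (rule that[OF R maximal])
qed

definition is_cycle :: "'a set \<Rightarrow> nat set \<Rightarrow> (nat \<Rightarrow> 'a \<Rightarrow> nat) \<Rightarrow> nat list \<Rightarrow> bool" where
  "is_cycle S M rho p \<longleftrightarrow> is_path S M rho p \<and> 2 \<le> length p \<and> hd p = last p"

lemma inf_set_iff_infinite: "k \<in> inf_set m \<longleftrightarrow> infinite {i. m i = k}"
  unfolding inf_set_def by (simp add: frequently_cofinite)

lemma inf_set_comp:
  assumes "finite (range m)"
  shows "inf_set (tau \<circ> m) = tau ` inf_set m"
proof
  show "tau ` inf_set m \<subseteq> inf_set (tau \<circ> m)"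
    unfolding inf_set_def by (auto elim: frequently_mono[rotated])
next
  show "inf_set (tau \<circ> m) \<subseteq> tau ` inf_set m"
  proof
    fix q assume "q \<in> inf_set (tau \<circ> m)"
    moreover have "{i. (tau \<circ> m) i = q} = (\<Union>k\<in>range m \<inter> {k. tau k = q}. {i. m i = k})"
      by auto
    ultimately have "infinite (\<Union>k\<in>range m \<inter> {k. tau k = q}. {i. m i = k})"
      unfolding inf_set_iff_infinite by simp
    then obtain k where "k \<in> range m" "tau k = q" "infinite {i. m i = k}"
      using assms finite_UN_I[of "range m \<inter> {k. tau k = q}" "\<lambda>k. {i. m i = k}"] by blast
    then show "q \<in> tau ` inf_set m" by (auto simp: inf_set_iff_infinite)
  qed
qed

lemma eventually_in_inf_set:
  assumes "finite M" "\<And>i. m i \<in> M"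
  obtains N where "\<And>i. N \<le> i \<Longrightarrow> m i \<in> inf_set m"
proof -
  have "{i. m i \<notin> inf_set m} = (\<Union>k\<in>M - inf_set m. {i. m i = k})"
    using assms(2) by auto
  moreover have "finite {i. m i = k}" if "k \<notin> inf_set m" for k
    using that unfolding inf_set_iff_infinite by simp
  ultimately have "finite {i. m i \<notin> inf_set m}"
    using assms(1) by simp
  then obtain N where "\<forall>i\<in>{i. m i \<notin> inf_set m}. i < N"
    using finite_nat_set_iff_bounded by blast
  then show thesis using that by (meson leD mem_Collect_eq)
qed

lemma inf_set_occurs_after:
  assumes "k \<in> inf_set m"
  shows "\<exists>j>n. m j = k"
  using assms unfolding inf_set_iff_infinite finite_nat_set_iff_bounded_le
  by (metis mem_Collect_eq not_le)

(* From some time N on the sequence stays in its infinity set; the segment from N to a return to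
   m N late enough to have visited every state of the infinity set is the cycle. *)
lemma cycle_of_inf_set:
  assumes "finite M" "\<And>i. m i \<in> M" "\<And>i. \<exists>a\<in>S. rho (m i) a = m (Suc i)"
  obtains p where "is_cycle S M rho p" "set p = inf_set m"
proof -
  let ?K = "inf_set m"
  obtain N where N: "\<And>i. N \<le> i \<Longrightarrow> m i \<in> ?K"
    using eventually_in_inf_set assms(1,2) by blast
  have "\<forall>k\<in>?K. \<exists>j. N < j \<and> m j = k"
    by (intro ballI inf_set_occurs_after)
  then obtain t where t: "\<forall>k\<in>?K. N < t k \<and> m (t k) = k"
    by (rule bchoice[elim_format]) blast
  have "?K \<subseteq> range m" using inf_set_occurs_after[of _ m 0] by blast
  then have "?K \<subseteq> M" using assms(2) by blast
  then have "finite ?K" using assms(1) by (rule finite_subset)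
  define n where "n = Max (insert N (t ` ?K))"
  have n: "N \<le> n" "\<And>k. k \<in> ?K \<Longrightarrow> t k \<le> n"
    unfolding n_def using \<open>finite ?K\<close> by auto
  obtain j where j: "n < j" "m j = m N"
    using inf_set_occurs_after[OF N[OF order_refl]] by blast
  define p where "p = map m [N..<Suc j]"
  have "set p = m ` {N..j}" unfolding p_def by auto
  also have "\<dots> = ?K"
  proof
    show "m ` {N..j} \<subseteq> ?K" using N by auto
    show "?K \<subseteq> m ` {N..j}"
    proof
      fix k assume "k \<in> ?K"
      then have "t k \<in> {N..j}" "k = m (t k)" using t n(2)[of k] j(1) by auto
      then show "k \<in> m ` {N..j}" by (rule rev_image_eqI)
    qed
  qed
  finally have set_p: "set p = ?K" .
  have "is_path S M rho p"
    unfolding is_path_def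
  proof (intro conjI allI impI)
    show "p \<noteq> []" "set p \<subseteq> M" unfolding p_def using assms(2) j n by auto
    fix i assume "Suc i < length p"
    then have "p ! i = m (N + i)" "p ! Suc i = m (Suc (N + i))"
      unfolding p_def by (simp_all del: upt_Suc)
    then show "\<exists>a\<in>S. rho (p ! i) a = p ! Suc i" using assms(3) by auto
  qed
  moreover have "2 \<le> length p" "hd p = last p"
    unfolding p_def using j n by (auto simp: hd_map last_map)
  ultimately show thesis using set_p by (intro that) (auto simp: is_cycle_def)
qed

lemma strat_inf_set_cycle:
  assumes "transducer S Q M m0 rho tau" "is_word S w"
  obtains p where "is_cycle S M rho p" "inf_set (\<lambda>i. strat m0 rho tau (pref w i)) = tau ` set p"
proof -
  define mem where "mem i = foldl rho m0 (pref w i)" for i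
  have mem_Suc: "mem (Suc i) = rho (mem i) (w i)" for i
    unfolding mem_def pref_def by simp
  have mem_M: "mem i \<in> M" for i
  proof (induction i)
    case 0
    then show ?case using assms(1) unfolding mem_def pref_def transducer_def by simp
  next
    case (Suc i)
    then show ?case using assms unfolding mem_Suc transducer_def is_word_def by blast
  qed
  have "finite M" using assms(1) unfolding transducer_def by blast
  moreover have "\<exists>a\<in>S. rho (mem i) a = mem (Suc i)" for i
    using assms(2) unfolding mem_Suc is_word_def by blast
  ultimately obtain p where p: "is_cycle S M rho p" "set p = inf_set mem"
    using mem_M cycle_of_inf_set by metis
  have "finite (range mem)" using \<open>finite M\<close> mem_M by (meson finite_subset image_subset_iff)
  then have "inf_set (tau \<circ> mem) = tau ` set p" unfolding p(2) by (rule inf_set_comp)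
  moreover have "(\<lambda>i. strat m0 rho tau (pref w i)) = tau \<circ> mem"
    unfolding strat_def mem_def by auto
  ultimately show thesis using p(1) that by simp
qed

lemma gfg_strategy_transfer:
  assumes g: "gfg_strategy S Q0 d al g"
    and sound: "\<And>Y. rabin_acc al' Y \<Longrightarrow> rabin_acc al Y"
    and complete: "\<And>w. is_word S w \<Longrightarrow> rabin_acc al (inf_set (\<lambda>i. g (pref w i))) \<Longrightarrow>
      rabin_acc al' (inf_set (\<lambda>i. g (pref w i)))"
  shows "lang S Q0 d al' = lang S Q0 d al" "gfg_strategy S Q0 d al' g"
proof -
  have "lang S Q0 d al' \<subseteq> lang S Q0 d al"
    unfolding lang_def using sound by blast
  moreover have "lang S Q0 d al \<subseteq> lang S Q0 d al'"
    using g complete unfolding gfg_strategy_def lang_def by blast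
  ultimately show lang: "lang S Q0 d al' = lang S Q0 d al" ..
  show "gfg_strategy S Q0 d al' g"
    using g complete unfolding gfg_strategy_def lang by blast
qed

lemma replaceable_transfer:
  assumes "replaceable S M rho tau al' m m'" "\<And>Y. rabin_acc al' Y \<Longrightarrow> rabin_acc al Y"
  shows "replaceable S M rho tau al m m'"
  using assms unfolding replaceable_def rabin_acc_alpha_g by blast

lemma tight_wrt_transfer:
  assumes tight: "tight_wrt S Q Q0 d al M m0 rho tau"
    and sound: "\<And>Y. rabin_acc al' Y \<Longrightarrow> rabin_acc al Y"
    and complete: "\<And>p. is_cycle S M rho p \<Longrightarrow> rabin_acc al (tau ` set p) \<Longrightarrow>
      rabin_acc al' (tau ` set p)"
  shows "lang S Q0 d al' = lang S Q0 d al" "tight_wrt S Q Q0 d al' M m0 rho tau"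
proof -
  have tr: "transducer S Q M m0 rho tau" and g: "gfg_strategy S Q0 d al (strat m0 rho tau)"
    using tight unfolding tight_wrt_def by blast+
  have "rabin_acc al' (inf_set (\<lambda>i. strat m0 rho tau (pref w i)))"
    if "is_word S w" "rabin_acc al (inf_set (\<lambda>i. strat m0 rho tau (pref w i)))" for w
    using strat_inf_set_cycle[OF tr that(1)] complete that(2) by metis
  note transfer = gfg_strategy_transfer[OF g sound this]
  show "lang S Q0 d al' = lang S Q0 d al" by (rule transfer(1))
  show "tight_wrt S Q Q0 d al' M m0 rho tau"
    using tight transfer(2) replaceable_transfer[OF _ sound] unfolding tight_wrt_def by blast
qed

lemma excl_acc_cycleI:
  assumes "is_cycle S M rho p" "rabin_acc al (tau ` set p)" "\<not> rabin_acc al (tau ` set p - {q})"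
  shows "excl_acc_cycle S M rho tau al q p"
proof -
  have "set p \<subseteq> M" using assms(1) unfolding is_cycle_def is_path_def by blast
  then have "tau ` (set p \<inter> M) = tau ` set p" "tau ` ((set p - {m. tau m = q}) \<inter> M) = tau ` set p - {q}"
    by blast+
  then show ?thesis
    using assms unfolding excl_acc_cycle_def is_cycle_def rabin_acc_alpha_g by simp
qed

lemma rabin_refinement:
  assumes "finite Q" "\<forall>(E, F)\<in>al. E \<subseteq> Q \<and> F \<subseteq> Q"
    and Acc: "\<And>Y. Y \<in> Acc \<Longrightarrow> Y \<subseteq> Q \<and> rabin_acc al Y"
  obtains al' where "finite al'" "\<forall>(E, F)\<in>al'. E \<subseteq> Q \<and> F \<subseteq> Q"
    "\<And>Y. rabin_acc al' Y \<Longrightarrow> rabin_acc al Y"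
    "\<And>Y. Y \<in> Acc \<Longrightarrow> rabin_acc al' Y"
    "\<And>E F q. (E, F) \<in> al' \<Longrightarrow> q \<in> F \<Longrightarrow> \<exists>Y\<in>Acc. \<not> rabin_acc al' (Y - {q})"
proof -
  let ?N = "{Y. Y \<subseteq> Q \<and> \<not> rabin_acc al Y}"
  have N: "?N \<subseteq> Pow Q" "union_closed ?N" "{} \<in> ?N" "?N \<inter> Acc = {}"
    unfolding union_closed_def using rabin_acc_Un not_rabin_acc_empty Acc by blast+
  obtain R where R: "?N \<subseteq> R" "R \<subseteq> Pow Q" "union_closed R" "R \<inter> Acc = {}"
    and maximal: "\<And>W. W \<subseteq> Q \<Longrightarrow> W \<notin> R \<Longrightarrow> \<exists>A\<in>R. W \<union> A \<in> Acc"
    by (rule maximal_union_closed_family[OF assms(1) N]) iprover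
  let ?al' = "rabin_of Q R"
  have acc': "rabin_acc ?al' Y \<longleftrightarrow> Y \<inter> Q \<notin> R" for Y
    using rabin_acc_rabin_of[OF assms(1) R(3)] R(1) N(3) by blast
  show thesis
  proof
    show "finite ?al'" using assms(1) by (rule finite_rabin_of)
    show "\<forall>(E, F)\<in>?al'. E \<subseteq> Q \<and> F \<subseteq> Q" using rabin_of_subset by blast
    show "rabin_acc al Y" if "rabin_acc ?al' Y" for Y
      using that acc' R(1) rabin_acc_Int[OF assms(2)] by blast
    show "rabin_acc ?al' Y" if "Y \<in> Acc" for Y
      using that acc' Acc R(4) by (metis Int_absorb2 disjoint_iff)
    fix E F q assume "(E, F) \<in> ?al'" "q \<in> F"
    then have "{q} \<notin> R" "q \<in> Q" using good_set_rabin_of[of E F Q R q] rabin_of_subset[of E F Q R]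
      by auto
    then obtain A where A: "A \<in> R" "insert q A \<in> Acc" using maximal[of "{q}"] by auto
    then have "q \<notin> A" using R(4) by (metis disjoint_iff insert_absorb)
    then have "insert q A - {q} = A" by simp
    moreover have "A \<inter> Q = A" using A(1) R(2) by blast
    ultimately have "\<not> rabin_acc ?al' (insert q A - {q})" using acc' A(1) by simp
    then show "\<exists>Y\<in>Acc. \<not> rabin_acc ?al' (Y - {q})" using A(2) by blast
  qed
qed

theorem lemma5:
  fixes S :: "'a set" and Q Q0 :: "'q set" and d :: "'q \<Rightarrow> 'a \<Rightarrow> 'q set"
    and al :: "('q set \<times> 'q set) set"
  assumes "wf_rabin S Q Q0 d al"
    and "is_gfg S Q0 d al"
    and "tight S Q Q0 d al"
  shows "\<exists>al'. wf_rabin S Q Q0 d al' \<and> lang S Q0 d al' = lang S Q0 d al \<and>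
           is_gfg S Q0 d al' \<and> strongly_tight S Q Q0 d al'"
proof -
  obtain M m0 rho tau where tight: "tight_wrt S Q Q0 d al M m0 rho tau"
    using assms(3) unfolding tight_def by blast
  define Acc where "Acc = {tau ` set p | p. is_cycle S M rho p \<and> rabin_acc al (tau ` set p)}"
  have Acc: "Y \<subseteq> Q \<and> rabin_acc al Y" if "Y \<in> Acc" for Y
    using that tight unfolding Acc_def tight_wrt_def transducer_def is_cycle_def is_path_def by blast
  have wf: "finite Q" "\<forall>(E, F)\<in>al. E \<subseteq> Q \<and> F \<subseteq> Q"
    using assms(1) unfolding wf_rabin_def by blast+
  obtain al' where al': "finite al'" "\<forall>(E, F)\<in>al'. E \<subseteq> Q \<and> F \<subseteq> Q"
    and sound: "\<And>Y. rabin_acc al' Y \<Longrightarrow> rabin_acc al Y"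
    and complete: "\<And>Y. Y \<in> Acc \<Longrightarrow> rabin_acc al' Y"
    and exclusive: "\<And>E F q. (E, F) \<in> al' \<Longrightarrow> q \<in> F \<Longrightarrow> \<exists>Y\<in>Acc. \<not> rabin_acc al' (Y - {q})"
    using rabin_refinement[OF wf Acc] by blast
  have cycles: "rabin_acc al' (tau ` set p)" if "is_cycle S M rho p" "rabin_acc al (tau ` set p)" for p
    using that complete unfolding Acc_def by blast
  note transfer = tight_wrt_transfer[OF tight sound cycles]
  have "\<exists>p. excl_acc_cycle S M rho tau al' q p" if "(E, F) \<in> al'" "q \<in> F" for E F q
    using exclusive[OF that] complete unfolding Acc_def by (blast intro: excl_acc_cycleI)
  then have "strongly_tight S Q Q0 d al'"
    using transfer(2) unfolding strongly_tight_def by blast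
  moreover have "wf_rabin S Q Q0 d al'" using assms(1) al' unfolding wf_rabin_def by blast
  moreover have "is_gfg S Q0 d al'" using transfer(2) unfolding tight_wrt_def is_gfg_def by blast
  ultimately show ?thesis using transfer(1) by blast
qed

end
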